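(* Let $G$ be a graph with a pendant vertex $v$ (a vertex of degree one). Then $p(G)=p(G-v)$.
   Context: All graphs are finite and simple. For an acyclic digraph $D$, the phylogeny graph $P(D)$ is the graph on $V(D)$ in which distinct vertices $u,v$ are adjacent if and only if $(u,v)\in A(D)$, or $(v,u)\in A(D)$, or there is a vertex $w$ with $(u,w),(v,w)\in A(D)$. A phylogeny digraph for a graph $G$ is an acyclic digraph $D$ such that $G$ is an induced subgraph of $P(D)$ and $D$ has no arc from a vertex of $V(D)\setminus V(G)$ to a vertex of $V(G)$. The phylogeny number $p(G)$ is the minimum of $|V(D)\setminus V(G)|$ over all phylogeny digraphs $D$ for $G$. *)

theory Defs
  imports Main
begin

definition simple_graph :: "'a set \<Rightarrow> 'a set set \<Rightarrow> bool" where
  "simple_graph V E \<longleftrightarrow> finite V \<and> (\<forall>e\<in>E. \<exists>u v. u \<noteq> v \<and> u \<in> V \<and> v \<in> V \<and> e = {u, v})"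

definition degree :: "'a set set \<Rightarrow> 'a \<Rightarrow> nat" where
  "degree E v = card {u. {u, v} \<in> E}"

definition pendant_vertex :: "'a set \<Rightarrow> 'a set set \<Rightarrow> 'a \<Rightarrow> bool" where
  "pendant_vertex V E v \<longleftrightarrow> v \<in> V \<and> degree E v = 1"

definition del_vertex_V :: "'a set \<Rightarrow> 'a \<Rightarrow> 'a set" where
  "del_vertex_V V v = V - {v}"

definition del_vertex_E :: "'a set set \<Rightarrow> 'a \<Rightarrow> 'a set set" where
  "del_vertex_E E v = {e \<in> E. v \<notin> e}"

definition acyclic_digraph :: "'b set \<Rightarrow> ('b \<times> 'b) set \<Rightarrow> bool" where
  "acyclic_digraph W A \<longleftrightarrow> finite W \<and> A \<subseteq> W \<times> W \<and> acyclic A"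

definition phylo_adj :: "'b set \<Rightarrow> ('b \<times> 'b) set \<Rightarrow> 'b \<Rightarrow> 'b \<Rightarrow> bool" where
  "phylo_adj W A u v \<longleftrightarrow> u \<in> W \<and> v \<in> W \<and> u \<noteq> v \<and>
     ((u, v) \<in> A \<or> (v, u) \<in> A \<or> (\<exists>w \<in> W. (u, w) \<in> A \<and> (v, w) \<in> A))"

text \<open>Phylogeny digraph for G = (V,E). Vertices of D live in type 'a + nat: the vertices
  of G are embedded via Inl, the additional vertices are of the form Inr n.\<close>
definition phylogeny_digraph ::
  "'a set \<Rightarrow> 'a set set \<Rightarrow> ('a + nat) set \<Rightarrow> (('a + nat) \<times> ('a + nat)) set \<Rightarrow> bool" where
  "phylogeny_digraph V E W A \<longleftrightarrow>
     acyclic_digraph W A \<and>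
     W \<inter> range Inl = Inl ` V \<and>
     (\<forall>u\<in>V. \<forall>v\<in>V. u \<noteq> v \<longrightarrow> ({u, v} \<in> E \<longleftrightarrow> phylo_adj W A (Inl u) (Inl v))) \<and>
     (\<forall>x \<in> W - Inl ` V. \<forall>y \<in> Inl ` V. (x, y) \<notin> A)"

definition phylogeny_number :: "'a set \<Rightarrow> 'a set set \<Rightarrow> nat" where
  "phylogeny_number V E =
     (LEAST k. \<exists>W A. phylogeny_digraph V E W A \<and> card (W - Inl ` V) = k)"

end

theory Submission
  imports Defs
begin

text \<open>If u is the unique neighbour of the pendant vertex v, a phylogeny digraph for G - v becomes
  one for G by adding v as a sink with the single arc (u, v); conversely, deleting v from a
  phylogeny digraph for G loses no adjacency, because v is prey only of u, so no two vertices of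
  G - v have v as their sole common prey. Both operations keep the set of extra vertices, so the
  two graphs admit phylogeny digraphs with exactly the same numbers of extra vertices.\<close>

lemma pendant_vertex_unique_neighbour:
  assumes "simple_graph V E" and "pendant_vertex V E v"
  obtains u where "u \<in> V" "u \<noteq> v" "\<And>x. {x, v} \<in> E \<longleftrightarrow> x = u"
proof -
  have "card {u. {u, v} \<in> E} = 1"
    using assms(2) by (simp add: pendant_vertex_def degree_def)
  then obtain u where u: "{x. {x, v} \<in> E} = {u}"
    by (rule card_1_singletonE)
  then have "{u, v} \<in> E" by auto
  with assms(1) have "u \<in> V" "u \<noteq> v"
    unfolding simple_graph_def by (auto simp: doubleton_eq_iff)
  with u show thesis using that by auto
qed

lemma acyclic_insert_leaf:
  assumes "acyclic A" "A \<subseteq> W \<times> W" "z \<notin> W" "y \<noteq> z"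
  shows "acyclic (insert (y, z) A)"
proof -
  have "(z, y) \<notin> A\<^sup>*"
  proof
    assume "(z, y) \<in> A\<^sup>*"
    then show False
      by (cases rule: converse_rtranclE) (use assms in auto)
  qed
  with assms(1) show ?thesis by (simp add: acyclic_insert)
qed

lemma phylo_adj_insert_leaf:
  assumes "A \<subseteq> W \<times> W" "z \<notin> W" "a \<noteq> z" "b \<noteq> z"
  shows "phylo_adj (insert z W) (insert (y, z) A) a b \<longleftrightarrow> phylo_adj W A a b"
proof
  assume adj: "phylo_adj (insert z W) (insert (y, z) A) a b"
  show "phylo_adj W A a b"
  proof (cases "(a, z) = (y, z) \<and> (b, z) = (y, z)")
    case True
    with adj show ?thesis by (simp add: phylo_adj_def)
  next
    case False
    have "(a, z) \<notin> A" "(b, z) \<notin> A" using assms by auto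
    with False adj assms(3,4) show ?thesis unfolding phylo_adj_def by auto
  qed
qed (auto simp: phylo_adj_def)

lemma phylo_adj_delete_vertex:
  assumes "a \<noteq> z" "b \<noteq> z" "\<not> ((a, z) \<in> A \<and> (b, z) \<in> A)"
  shows "phylo_adj (W - {z}) {(p, q) \<in> A. p \<noteq> z \<and> q \<noteq> z} a b \<longleftrightarrow> phylo_adj W A a b"
  using assms unfolding phylo_adj_def by auto

lemma phylogeny_digraph_add_pendant:
  assumes pd: "phylogeny_digraph (V - {v}) (del_vertex_E E v) W A"
    and "u \<in> V" "v \<in> V" "u \<noteq> v"
    and nbr: "\<And>x. {x, v} \<in> E \<longleftrightarrow> x = u"
  shows "phylogeny_digraph V E (insert (Inl v) W) (insert (Inl u, Inl v) A)"
    and "insert (Inl v) W - Inl ` V = W - Inl ` (V - {v})"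
proof -
  let ?W = "insert (Inl v) W" and ?A = "insert (Inl u, Inl v) A"
  from pd have fin: "finite W" and sub: "A \<subseteq> W \<times> W" and acy: "acyclic A"
    and rng: "W \<inter> range Inl = Inl ` (V - {v})"
    and adj: "\<forall>x\<in>V - {v}. \<forall>y\<in>V - {v}. x \<noteq> y \<longrightarrow>
                ({x, y} \<in> del_vertex_E E v \<longleftrightarrow> phylo_adj W A (Inl x) (Inl y))"
    and extra: "\<forall>x \<in> W - Inl ` (V - {v}). \<forall>y \<in> Inl ` (V - {v}). (x, y) \<notin> A"
    unfolding phylogeny_digraph_def acyclic_digraph_def by auto
  have vW: "Inl v \<notin> W" and uW: "Inl u \<in> W" using rng assms(2-4) by auto
  show extra_eq: "?W - Inl ` V = W - Inl ` (V - {v})" using vW assms(2-4) by auto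
  have no_arc_v: "(Inl v, p) \<notin> A" "(p, Inl v) \<notin> A" for p using sub vW by auto
  have adj_v: "phylo_adj ?W ?A (Inl x) (Inl v) \<longleftrightarrow> x = u"
    "phylo_adj ?W ?A (Inl v) (Inl x) \<longleftrightarrow> x = u" if "x \<noteq> v" for x
    using that uW no_arc_v assms(4) unfolding phylo_adj_def by auto
  have "{x, y} \<in> E \<longleftrightarrow> phylo_adj ?W ?A (Inl x) (Inl y)"
    if "x \<in> V" "y \<in> V" "x \<noteq> y" for x y
  proof -
    consider "x = v" | "y = v" | "x \<noteq> v" "y \<noteq> v" by blast
    then show ?thesis
    proof cases
      case 1
      then show ?thesis using adj_v(2)[of y] nbr[of y] that by (auto simp: insert_commute)
    next
      case 2
      then show ?thesis using adj_v(1)[of x] nbr[of x] that by auto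
    next
      case 3
      then have "{x, y} \<in> E \<longleftrightarrow> {x, y} \<in> del_vertex_E E v" by (auto simp: del_vertex_E_def)
      also have "\<dots> \<longleftrightarrow> phylo_adj W A (Inl x) (Inl y)" using adj that 3 by auto
      also have "\<dots> \<longleftrightarrow> phylo_adj ?W ?A (Inl x) (Inl y)"
        using phylo_adj_insert_leaf[OF sub vW] 3 by simp
      finally show ?thesis .
    qed
  qed
  moreover have "(p, q) \<notin> ?A" if p: "p \<in> ?W - Inl ` V" and q: "q \<in> Inl ` V" for p q
  proof -
    have "p \<in> W - Inl ` (V - {v})" "p \<noteq> Inl u" using p extra_eq assms(2) by auto
    then show ?thesis using extra q no_arc_v by auto
  qed
  moreover have "acyclic ?A" by (rule acyclic_insert_leaf[OF acy sub vW]) (simp add: assms(4))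
  then have "acyclic_digraph ?W ?A" using fin sub uW unfolding acyclic_digraph_def by auto
  moreover have "?W \<inter> range Inl = Inl ` V" using rng assms(3) by auto
  ultimately show "phylogeny_digraph V E ?W ?A" unfolding phylogeny_digraph_def by blast
qed

lemma phylogeny_digraph_delete_pendant:
  assumes pd: "phylogeny_digraph V E W A"
    and "v \<in> V"
    and nbr: "\<And>x. {x, v} \<in> E \<Longrightarrow> x = u"
  shows "phylogeny_digraph (V - {v}) (del_vertex_E E v)
           (W - {Inl v}) {(a, b) \<in> A. a \<noteq> Inl v \<and> b \<noteq> Inl v}"
    and "(W - {Inl v}) - Inl ` (V - {v}) = W - Inl ` V"
proof -
  let ?W = "W - {Inl v}" and ?A = "{(a, b) \<in> A. a \<noteq> Inl v \<and> b \<noteq> Inl v}"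
  from pd have fin: "finite W" and sub: "A \<subseteq> W \<times> W" and acy: "acyclic A"
    and rng: "W \<inter> range Inl = Inl ` V"
    and adj: "\<forall>x\<in>V. \<forall>y\<in>V. x \<noteq> y \<longrightarrow> ({x, y} \<in> E \<longleftrightarrow> phylo_adj W A (Inl x) (Inl y))"
    and extra: "\<forall>p \<in> W - Inl ` V. \<forall>q \<in> Inl ` V. (p, q) \<notin> A"
    unfolding phylogeny_digraph_def acyclic_digraph_def by auto
  show extra_eq: "?W - Inl ` (V - {v}) = W - Inl ` V" using rng assms(2) by auto
  have only_u_has_prey_v: "x = u" if "x \<in> V" "x \<noteq> v" "(Inl x, Inl v) \<in> A" for x
  proof -
    have "phylo_adj W A (Inl x) (Inl v)"
      using that sub unfolding phylo_adj_def by auto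
    then show ?thesis using adj that assms(2) nbr by auto
  qed
  have "{x, y} \<in> del_vertex_E E v \<longleftrightarrow> phylo_adj ?W ?A (Inl x) (Inl y)"
    if "x \<in> V - {v}" "y \<in> V - {v}" "x \<noteq> y" for x y
  proof -
    have "{x, y} \<in> del_vertex_E E v \<longleftrightarrow> {x, y} \<in> E"
      using that by (auto simp: del_vertex_E_def)
    also have "\<dots> \<longleftrightarrow> phylo_adj W A (Inl x) (Inl y)" using adj that by auto
    also have "\<dots> \<longleftrightarrow> phylo_adj ?W ?A (Inl x) (Inl y)"
      using phylo_adj_delete_vertex[of "Inl x" "Inl v" "Inl y" A W] only_u_has_prey_v that by auto
    finally show ?thesis .
  qed
  moreover have "\<forall>p \<in> ?W - Inl ` (V - {v}). \<forall>q \<in> Inl ` (V - {v}). (p, q) \<notin> ?A"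
    using extra extra_eq by auto
  moreover have "acyclic ?A" by (rule acyclic_subset[OF acy]) auto
  then have "acyclic_digraph ?W ?A" using fin sub unfolding acyclic_digraph_def by auto
  moreover have "?W \<inter> range Inl = Inl ` (V - {v})" using rng by auto
  ultimately show "phylogeny_digraph (V - {v}) (del_vertex_E E v) ?W ?A"
    unfolding phylogeny_digraph_def by blast
qed

lemma phylogeny_number_eqI:
  assumes "\<And>W A. phylogeny_digraph V E W A \<Longrightarrow>
             \<exists>W' A'. phylogeny_digraph V' E' W' A' \<and> W' - Inl ` V' = W - Inl ` V"
    and "\<And>W' A'. phylogeny_digraph V' E' W' A' \<Longrightarrow>
             \<exists>W A. phylogeny_digraph V E W A \<and> W - Inl ` V = W' - Inl ` V'"
  shows "phylogeny_number V E = phylogeny_number V' E'"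
proof -
  have "(\<exists>W A. phylogeny_digraph V E W A \<and> card (W - Inl ` V) = k) \<longleftrightarrow>
        (\<exists>W' A'. phylogeny_digraph V' E' W' A' \<and> card (W' - Inl ` V') = k)" for k
  proof
    assume "\<exists>W A. phylogeny_digraph V E W A \<and> card (W - Inl ` V) = k"
    then obtain W A where "phylogeny_digraph V E W A" "card (W - Inl ` V) = k" by blast
    with assms(1) show "\<exists>W' A'. phylogeny_digraph V' E' W' A' \<and> card (W' - Inl ` V') = k"
      by fastforce
  next
    assume "\<exists>W' A'. phylogeny_digraph V' E' W' A' \<and> card (W' - Inl ` V') = k"
    then obtain W' A' where "phylogeny_digraph V' E' W' A'" "card (W' - Inl ` V') = k" by blast
    with assms(2) show "\<exists>W A. phylogeny_digraph V E W A \<and> card (W - Inl ` V) = k"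
      by fastforce
  qed
  then show ?thesis unfolding phylogeny_number_def by simp
qed

theorem mainTheorem6:
  fixes V :: "'a set" and E :: "'a set set" and v :: 'a
  assumes "simple_graph V E"
    and "pendant_vertex V E v"
  shows "phylogeny_number V E = phylogeny_number (del_vertex_V V v) (del_vertex_E E v)"
proof -
  have v: "v \<in> V" using assms(2) by (simp add: pendant_vertex_def)
  obtain u where u: "u \<in> V" "u \<noteq> v" and nbr: "\<And>x. {x, v} \<in> E \<longleftrightarrow> x = u"
    using pendant_vertex_unique_neighbour[OF assms] by metis
  have nbr_eq_u: "\<And>x. {x, v} \<in> E \<Longrightarrow> x = u" using nbr by simp
  show ?thesis
    unfolding del_vertex_V_def
  proof (rule phylogeny_number_eqI)
    fix W A assume "phylogeny_digraph V E W A"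
    from phylogeny_digraph_delete_pendant[OF this v nbr_eq_u]
    show "\<exists>W' A'. phylogeny_digraph (V - {v}) (del_vertex_E E v) W' A' \<and>
            W' - Inl ` (V - {v}) = W - Inl ` V"
      by (intro exI conjI)
  next
    fix W A assume "phylogeny_digraph (V - {v}) (del_vertex_E E v) W A"
    from phylogeny_digraph_add_pendant[OF this u(1) v u(2) nbr]
    show "\<exists>W' A'. phylogeny_digraph V E W' A' \<and> W' - Inl ` V = W - Inl ` (V - {v})"
      by (intro exI conjI)
  qed
qed

end
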